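(* Let $n\ge2$ and let $\mathcal{S}$ be a set of two-factor interactions among factors $F_1,\dots,F_n$ such that there is no sequence of distinct factors $G_1,\dots,G_m$ ($m\ge3$) with $G_1G_2,\dots,G_{m-1}G_m,G_mG_1\in\mathcal{S}$ (i.e. the requirements graph is acyclic). If every factor appears in at most four interactions of $\mathcal{S}$, then there exists a blocked $2^n$ factorial in blocks of size four whose generator matrix has all columns nonzero (so all main effects are estimable), from which all interactions in $\mathcal{S}$ are estimable, and whose number of estimable two-factor interactions equals $\phi_{\max}=\binom n2-vw-3\binom v2$, where $n=3v+w$, $v=\lfloor n/3\rfloor$, $w\in\{0,1,2\}$.
   Context: A blocked $2^n$ factorial in blocks of size four is specified by a $2\times n$ generator matrix $X$ over $\mathrm{GF}(2)$ of rank $2$: the principal block is the row space of $X$ and the other blocks are its cosets in $\mathrm{GF}(2)^n$. An effect of a set $S$ of factors, with contrast $(-1)^{\sum_{j\in S}x_j}$, is estimable iff its contrast sums to zero over every block; equivalently $F_jF_k$ is estimable iff columns $j,k$ of $X$ differ, and the main effect of $F_j$ is estimable iff column $j$ is nonzero. *)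

theory Defs
  imports Main
begin

text \<open>GF(2) is modelled by bool (addition = exclusive or). Factors are indexed
  0..n-1. A 2 x n generator matrix X over GF(2) is given by its columns:
  X j = (entry in row 1, entry in row 2) of column j (only j < n matter).
  Treatment combinations are vectors x in GF(2)^n, i.e. x :: nat => bool
  with x j = False for j >= n.\<close>

type_synonym genmat = "nat \<Rightarrow> bool \<times> bool"

definition vecs :: "nat \<Rightarrow> (nat \<Rightarrow> bool) set" where
  "vecs n = {x. \<forall>j\<ge>n. \<not> x j}"

definition vadd :: "(nat \<Rightarrow> bool) \<Rightarrow> (nat \<Rightarrow> bool) \<Rightarrow> nat \<Rightarrow> bool" where
  "vadd x y = (\<lambda>j. x j \<noteq> y j)"

definition rank2 :: "nat \<Rightarrow> genmat \<Rightarrow> bool" where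
  "rank2 n X \<longleftrightarrow> (\<forall>a b :: bool.
      (\<forall>j<n. (a \<and> fst (X j)) = (b \<and> snd (X j))) \<longrightarrow> \<not> a \<and> \<not> b)"

text \<open>Principal block = row space of X.\<close>
definition rowspace :: "nat \<Rightarrow> genmat \<Rightarrow> (nat \<Rightarrow> bool) set" where
  "rowspace n X = {(\<lambda>j. j < n \<and> ((a \<and> fst (X j)) \<noteq> (b \<and> snd (X j)))) | a b. True}"

definition block :: "nat \<Rightarrow> genmat \<Rightarrow> (nat \<Rightarrow> bool) \<Rightarrow> (nat \<Rightarrow> bool) set" where
  "block n X x = vadd x ` rowspace n X"

definition contrast :: "nat set \<Rightarrow> (nat \<Rightarrow> bool) \<Rightarrow> int" where
  "contrast S x = (-1) ^ card {j \<in> S. x j}"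

definition estimable :: "nat \<Rightarrow> genmat \<Rightarrow> nat set \<Rightarrow> bool" where
  "estimable n X S \<longleftrightarrow> (\<forall>x \<in> vecs n. (\<Sum>y \<in> block n X x. contrast S y) = 0)"

definition num_est_2fi :: "nat \<Rightarrow> genmat \<Rightarrow> nat" where
  "num_est_2fi n X = card {e. e \<subseteq> {0..<n} \<and> card e = 2 \<and> estimable n X e}"

definition phi_max :: "nat \<Rightarrow> int" where
  "phi_max n = (let v = n div 3; w = n mod 3 in
      int (n choose 2) - int v * int w - 3 * int (v choose 2))"

definition req_acyclic :: "nat set set \<Rightarrow> bool" where
  "req_acyclic S \<longleftrightarrow> \<not> (\<exists>G :: nat list. length G \<ge> 3 \<and> distinct G \<and>
      (\<forall>i < length G - 1. {G ! i, G ! (i+1)} \<in> S) \<and> {last G, hd G} \<in> S)"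

end

theory Submission
  imports Defs
begin

text \<open>Colour the factors with three colours so that every required interaction joins factors of
  different colours and the colour classes have sizes \<open>\<lceil>n/3\<rceil>, \<lceil>(n-1)/3\<rceil>, \<lfloor>n/3\<rfloor>\<close>, and give
  the factors of colour \<open>i\<close> the \<open>i\<close>-th nonzero vector of \<open>GF(2)\<^sup>2\<close> as column. Since \<open>F\<^sub>jF\<^sub>k\<close> is
  estimable iff columns \<open>j\<close> and \<open>k\<close> differ, the estimable interactions are exactly the pairs
  of different colours; there are \<open>C(n,2) - \<Sum>\<^sub>i C(|class i|,2) = \<phi>\<^sub>m\<^sub>a\<^sub>x\<close> of them.

  Such an equitable colouring of a forest of maximum degree 4 is built by induction, three
  vertices at a time: there are always vertices \<open>a, b, c\<close> such that outside \<open>{a, b, c}\<close> the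
  vertex \<open>a\<close> has no neighbour, \<open>b\<close> at most one and \<open>c\<close> at most two. After colouring the
  rest, \<open>c\<close>, \<open>b\<close>, \<open>a\<close> receive the three colours greedily. The triple comes from a vertex of
  degree at most one in the forest obtained by deleting all leaves, together with its leaf
  neighbours.\<close>

section \<open>Estimable two-factor interactions\<close>

lemma contrast_pair:
  assumes "j \<noteq> k"
  shows "contrast {j, k} y = (if y j = y k then 1 else -1)"
proof -
  have "{i \<in> {j, k}. y i} = (if y j then {j} else {}) \<union> (if y k then {k} else {})" by auto
  then show ?thesis using assms by (simp add: contrast_def)
qed

definition rowcomb :: "nat \<Rightarrow> genmat \<Rightarrow> bool \<times> bool \<Rightarrow> nat \<Rightarrow> bool" where
  "rowcomb n X = (\<lambda>(a, b) j. j < n \<and> ((a \<and> fst (X j)) \<noteq> (b \<and> snd (X j))))"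

lemma rowspace_eq_range_rowcomb: "rowspace n X = range (rowcomb n X)"
  by (auto simp: rowspace_def rowcomb_def)

lemma inj_rowcomb:
  assumes "rank2 n X"
  shows "inj (rowcomb n X)"
proof (rule injI)
  fix p q assume eq: "rowcomb n X p = rowcomb n X q"
  obtain a b a' b' where pq: "p = (a, b)" "q = (a', b')" by fastforce
  have "\<forall>j<n. ((a \<noteq> a') \<and> fst (X j)) = ((b \<noteq> b') \<and> snd (X j))"
  proof (intro allI impI)
    fix j assume "j < n"
    then show "((a \<noteq> a') \<and> fst (X j)) = ((b \<noteq> b') \<and> snd (X j))"
      using fun_cong[OF eq, of j] by (auto simp: rowcomb_def pq)
  qed
  then show "p = q" using assms pq by (auto simp: rank2_def)
qed

lemma vadd_vadd_cancel: "vadd x (vadd x y) = y"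
  by (rule ext) (auto simp: vadd_def)

lemma sum_block:
  assumes "rank2 n X"
  shows "(\<Sum>y \<in> block n X x. f y) = (\<Sum>p \<in> UNIV. f (vadd x (rowcomb n X p)))"
proof -
  have "inj (vadd x)"
    by (metis injI vadd_vadd_cancel)
  then have "inj (vadd x \<circ> rowcomb n X)"
    using inj_rowcomb[OF assms] by (simp add: inj_compose)
  moreover have "block n X x = (vadd x \<circ> rowcomb n X) ` UNIV"
    by (simp add: block_def rowspace_eq_range_rowcomb image_comp)
  ultimately show ?thesis
    using sum.reindex[of "vadd x \<circ> rowcomb n X" UNIV f] by simp
qed

lemma UNIV_bool_pair:
  "(UNIV :: (bool \<times> bool) set) = {(True, True), (True, False), (False, True), (False, False)}"
  by auto

text \<open>On the block element \<open>x + a\<cdot>row\<^sub>1 + b\<cdot>row\<^sub>2\<close> the pair contrast is that of \<open>x\<close> times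
  \<open>(-1)\<^bsup>a(p+p') + b(q+q')\<^esup>\<close>, where \<open>(p, q)\<close> and \<open>(p', q')\<close> are columns \<open>j\<close> and \<open>k\<close>.\<close>
lemma block_sum_contrast_pair:
  assumes "rank2 n X" "j < n" "k < n" "j \<noteq> k"
  shows "(\<Sum>y \<in> block n X x. contrast {j, k} y) =
    (if x j = x k then 1 else -1) * (if X j = X k then 4 else 0)"
proof -
  obtain p q p' q' where X: "X j = (p, q)" "X k = (p', q')" by fastforce
  let ?t = "\<lambda>a b. if (x j \<noteq> ((a \<and> p) \<noteq> (b \<and> q))) = (x k \<noteq> ((a \<and> p') \<noteq> (b \<and> q'))) then 1 else -1 :: int"
  have "(\<Sum>y \<in> block n X x. contrast {j, k} y) = (\<Sum>(a, b) \<in> UNIV. ?t a b)"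
    using assms(2-4) by (simp add: sum_block[OF assms(1)] contrast_pair vadd_def rowcomb_def X case_prod_beta)
  also have "\<dots> = ?t True True + ?t True False + ?t False True + ?t False False"
    by (simp add: UNIV_bool_pair)
  also have "\<dots> = (if x j = x k then 1 else -1) * (if (p, q) = (p', q') then 4 else 0)"
    by (cases "x j"; cases "x k"; cases p; cases q; cases p'; cases q'; simp)
  finally show ?thesis by (simp add: X)
qed

lemma estimable_pair_iff:
  assumes "rank2 n X" "j < n" "k < n" "j \<noteq> k"
  shows "estimable n X {j, k} \<longleftrightarrow> X j \<noteq> X k"
proof -
  have "(\<lambda>_. False) \<in> vecs n" by (simp add: vecs_def)
  then show ?thesis
    by (auto simp: estimable_def block_sum_contrast_pair[OF assms])
qed

lemma rank2_if_unit_columns: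
  assumes "j < n" "k < n" "X j = (True, False)" "X k = (False, True)"
  shows "rank2 n X"
  using assms unfolding rank2_def by (metis fst_conv snd_conv)

section \<open>Monochromatic pairs\<close>

definition mono_pairs :: "'a set \<Rightarrow> ('a \<Rightarrow> 'b) \<Rightarrow> 'a set set" where
  "mono_pairs W f = {e. e \<subseteq> W \<and> card e = 2 \<and> (\<forall>u \<in> e. \<forall>v \<in> e. f u = f v)}"

lemma mono_pairs_comp: "inj_on g (f ` W) \<Longrightarrow> mono_pairs W (g \<circ> f) = mono_pairs W f"
  unfolding mono_pairs_def inj_on_def by (metis (no_types, opaque_lifting) comp_apply image_eqI subsetD)

lemma card_mono_pairs:
  assumes "finite W" "finite K" "f ` W \<subseteq> K"
  shows "card (mono_pairs W f) = (\<Sum>i \<in> K. card {v \<in> W. f v = i} choose 2)"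
proof -
  let ?P = "\<lambda>i. {e. e \<subseteq> {v \<in> W. f v = i} \<and> card e = 2}"
  have classes: "mono_pairs W f = (\<Union>i \<in> K. ?P i)"
  proof (intro equalityI subsetI)
    fix e assume "e \<in> mono_pairs W f"
    then have e: "e \<subseteq> W" "card e = 2" "\<forall>u \<in> e. \<forall>v \<in> e. f u = f v"
      unfolding mono_pairs_def by blast+
    then obtain u where u: "u \<in> e" by fastforce
    then have "\<forall>v \<in> e. f v = f u" using e(3) by blast
    then have "e \<in> ?P (f u)" using e(1,2) by auto
    moreover have "f u \<in> K" using assms(3) e(1) u by auto
    ultimately show "e \<in> (\<Union>i \<in> K. ?P i)" by (rule UN_I[rotated])
  next
    fix e assume "e \<in> (\<Union>i \<in> K. ?P i)"
    then obtain i where "e \<subseteq> W" "\<forall>v \<in> e. f v = i" "card e = 2" by blast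
    then show "e \<in> mono_pairs W f" unfolding mono_pairs_def by simp
  qed
  have "card (mono_pairs W f) = (\<Sum>i \<in> K. card (?P i))"
    unfolding classes
  proof (rule card_UN_disjoint)
    show "\<forall>i \<in> K. finite (?P i)"
      using assms(1) by (auto intro: finite_subset[of _ "Pow W"])
    show "\<forall>i \<in> K. \<forall>j \<in> K. i \<noteq> j \<longrightarrow> ?P i \<inter> ?P j = {}"
      by (fastforce simp: card_2_iff)
  qed fact
  also have "\<dots> = (\<Sum>i \<in> K. card {v \<in> W. f v = i} choose 2)"
    using assms(1) by (simp add: n_subsets)
  finally show ?thesis .
qed

lemma doubleton_in_mono_pairs_iff:
  assumes "j \<noteq> k"
  shows "{j, k} \<in> mono_pairs W f \<longleftrightarrow> {j, k} \<subseteq> W \<and> f j = f k"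
  using assms unfolding mono_pairs_def by (auto simp del: insert_subset)

lemma estimable_pairs_eq:
  assumes "rank2 n X"
  shows "{e. e \<subseteq> {0..<n} \<and> card e = 2 \<and> estimable n X e} =
    {e. e \<subseteq> {0..<n} \<and> card e = 2} - mono_pairs {0..<n} X"
proof -
  have "estimable n X e \<longleftrightarrow> e \<notin> mono_pairs {0..<n} X" if pair: "e \<subseteq> {0..<n}" "card e = 2" for e
  proof -
    obtain j k where e: "e = {j, k}" "j \<noteq> k" using pair(2) by (auto simp: card_2_iff)
    then show ?thesis
      using pair(1) estimable_pair_iff[OF assms, of j k] doubleton_in_mono_pairs_iff[of j k] by auto
  qed
  then show ?thesis by blast
qed

lemma num_est_2fi_eq:
  assumes "rank2 n X"
  shows "int (num_est_2fi n X) = int (n choose 2) - int (card (mono_pairs {0..<n} X))"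
proof -
  let ?pairs = "{e. e \<subseteq> {0..<n} \<and> card e = 2}"
  have "mono_pairs {0..<n} X \<subseteq> ?pairs" unfolding mono_pairs_def by blast
  moreover have "finite ?pairs" by (rule finite_subset[of _ "Pow {0..<n}"]) auto
  ultimately have "card (mono_pairs {0..<n} X) \<le> card ?pairs"
    "card (?pairs - mono_pairs {0..<n} X) = card ?pairs - card (mono_pairs {0..<n} X)"
    by (simp_all add: card_mono card_Diff_subset finite_subset)
  moreover have "card ?pairs = n choose 2" using n_subsets[of "{0..<n}" 2] by simp
  ultimately show ?thesis
    unfolding num_est_2fi_def estimable_pairs_eq[OF assms] by simp
qed

section \<open>Equitable 3-colourings of forests of maximum degree 4\<close>

definition nbrs :: "'a set set \<Rightarrow> 'a set \<Rightarrow> 'a \<Rightarrow> 'a set" where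
  "nbrs S V v = {u \<in> V. {u, v} \<in> S}"

lemma nbrs_mono: "V \<subseteq> V' \<Longrightarrow> nbrs S V v \<subseteq> nbrs S V' v"
  by (auto simp: nbrs_def)

lemma finite_nbrs: "finite V \<Longrightarrow> finite (nbrs S V v)"
  by (simp add: nbrs_def)

lemma nbrs_sym: "u \<in> nbrs S V v \<Longrightarrow> v \<in> V' \<Longrightarrow> v \<in> nbrs S V' u"
  by (simp add: nbrs_def insert_commute)

lemma nbrs_subset_singleton:
  "finite W \<Longrightarrow> card (nbrs S W z) \<le> 1 \<Longrightarrow> y \<in> nbrs S W z \<Longrightarrow> nbrs S W z \<subseteq> {y}"
  using card_le_Suc0_iff_eq[OF finite_nbrs] by fastforce

lemma card_nbrs_mono: "finite V' \<Longrightarrow> V \<subseteq> V' \<Longrightarrow> card (nbrs S V v) \<le> card (nbrs S V' v)"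
  by (intro card_mono finite_nbrs nbrs_mono)

definition path_in :: "'a set set \<Rightarrow> 'a set \<Rightarrow> 'a list \<Rightarrow> bool" where
  "path_in S V G \<longleftrightarrow> G \<noteq> [] \<and> distinct G \<and> set G \<subseteq> V \<and> (\<forall>i < length G - 1. {G ! i, G ! (i + 1)} \<in> S)"

lemma path_in_snoc:
  assumes "path_in S V G" "u \<in> V" "u \<notin> set G" "{last G, u} \<in> S"
  shows "path_in S V (G @ [u])"
  unfolding path_in_def
proof (intro conjI allI impI)
  show "G @ [u] \<noteq> []" "distinct (G @ [u])" "set (G @ [u]) \<subseteq> V"
    using assms(1-3) by (auto simp: path_in_def)
  fix i assume i: "i < length (G @ [u]) - 1"
  show "{(G @ [u]) ! i, (G @ [u]) ! (i + 1)} \<in> S"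
  proof (cases "i + 1 < length G")
    case True
    then show ?thesis using assms(1) by (simp add: path_in_def nth_append)
  next
    case False
    then have "i = length G - 1" "G \<noteq> []" using i assms(1) by (auto simp: path_in_def)
    then show ?thesis using assms(4) by (simp add: nth_append last_conv_nth)
  qed
qed

lemma path_in_drop:
  assumes "path_in S V G" "i < length G"
  shows "path_in S V (drop i G)"
  using assms by (auto simp: path_in_def set_drop_subset[THEN subset_trans] add.assoc)

text \<open>Once \<open>W - {a, b, c}\<close> is coloured, \<open>c\<close>, \<open>b\<close> and \<open>a\<close> can take the three colours in this order.\<close>
definition removable_triple :: "'a set set \<Rightarrow> 'a set \<Rightarrow> 'a \<Rightarrow> 'a \<Rightarrow> 'a \<Rightarrow> bool" where
  "removable_triple S W a b c \<longleftrightarrow> a \<in> W \<and> b \<in> W \<and> c \<in> W \<and> distinct [a, b, c] \<and>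
     nbrs S (W - {a, b, c}) a = {} \<and> card (nbrs S (W - {a, b, c}) b) \<le> 1 \<and>
     card (nbrs S (W - {a, b, c}) c) \<le> 2"

lemma removable_triple_cherry:
  assumes "finite W" "y \<in> W" "x1 \<noteq> x2"
    and "x1 \<in> nbrs S W y" "x2 \<in> nbrs S W y" "nbrs S W x1 \<subseteq> {y}" "nbrs S W x2 \<subseteq> {y}"
    and "card (nbrs S W y) \<le> 4" "y \<notin> nbrs S W y"
  shows "removable_triple S W x1 x2 y"
proof -
  let ?W' = "W - {x1, x2, y}"
  have "nbrs S ?W' y \<subseteq> nbrs S W y - {x1, x2}" by (auto simp: nbrs_def)
  then have "card (nbrs S ?W' y) \<le> card (nbrs S W y - {x1, x2})"
    using assms(1) by (intro card_mono) (auto simp: finite_nbrs)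
  also have "\<dots> = card (nbrs S W y) - 2"
    using assms(1,3-5) by (simp add: card_Diff_subset finite_nbrs)
  finally have "card (nbrs S ?W' y) \<le> 2" using assms(8) by linarith
  moreover have "nbrs S ?W' x1 = {}" "nbrs S ?W' x2 = {}"
    using assms(6,7) by (auto simp: nbrs_def)
  moreover have "x1 \<in> W" "x2 \<in> W" "x1 \<noteq> y" "x2 \<noteq> y"
    using assms(4,5,9) by (auto simp: nbrs_def)
  ultimately show ?thesis using assms(2,3) by (simp add: removable_triple_def)
qed

lemma exists_colors_for_triple:
  fixes Fb Fc :: "nat set"
  assumes "finite Fb" "finite Fc" "card Fb \<le> 1" "card Fc \<le> 2"
  shows "\<exists>ca cb cc. {ca, cb, cc} = {..<3} \<and> cb \<notin> Fb \<and> cc \<notin> Fc"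
proof -
  have "\<not> {..<3} \<subseteq> Fc"
    using card_mono[OF assms(2), of "{..<3}"] assms(4) by auto
  then obtain cc where cc: "cc < 3" "cc \<notin> Fc" by blast
  have "card ({..<3} - {cc}) = 2" using cc(1) by simp
  then have "\<not> {..<3} - {cc} \<subseteq> Fb"
    using card_mono[OF assms(1), of "{..<3} - {cc}"] assms(3) by auto
  then obtain cb where cb: "cb < 3" "cb \<noteq> cc" "cb \<notin> Fb" by blast
  have "{3 - cb - cc, cb, cc} = {..<3}"
    using cb cc by (auto simp: lessThan_def less_Suc_eq numeral_3_eq_3)
  then show ?thesis using cb cc by blast
qed

definition proper_coloring :: "'a set set \<Rightarrow> 'a set \<Rightarrow> ('a \<Rightarrow> nat) \<Rightarrow> bool" where
  "proper_coloring S W col \<longleftrightarrow> (\<forall>u \<in> W. \<forall>v \<in> W. {u, v} \<in> S \<longrightarrow> col u \<noteq> col v)"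

definition equitable3 :: "'a set \<Rightarrow> ('a \<Rightarrow> nat) \<Rightarrow> bool" where
  "equitable3 W col \<longleftrightarrow> col ` W \<subseteq> {..<3} \<and> (\<forall>i < 3. card {v \<in> W. col v = i} = (card W + 2 - i) div 3)"

lemma card_fiber_bij_betw:
  assumes "bij_betw f T K" "i \<in> K"
  shows "card {t \<in> T. f t = i} = 1"
proof -
  obtain t where "t \<in> T" "f t = i" using assms by (auto simp: bij_betw_def)
  then have "{t \<in> T. f t = i} = {t}" using assms(1) by (auto simp: bij_betw_def inj_on_def)
  then show ?thesis by simp
qed

lemma proper_coloring_extend:
  assumes "proper_coloring S (W - T) col0" "\<forall>v \<in> W - T. col v = col0 v"
    and "\<forall>t \<in> T. col t \<notin> col0 ` nbrs S (W - T) t" "inj_on col T" "\<forall>u. {u} \<notin> S"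
  shows "proper_coloring S W col"
proof -
  have cross: "col u \<noteq> col t" if "u \<in> W - T" "t \<in> T" "{u, t} \<in> S" for u t
  proof -
    have "u \<in> nbrs S (W - T) t" using that by (simp add: nbrs_def)
    then have "col u \<in> col0 ` nbrs S (W - T) t" using assms(2) that(1) by simp
    then show ?thesis using assms(3) that(2) by auto
  qed
  show ?thesis
    unfolding proper_coloring_def
  proof (intro ballI impI)
    fix u v assume uv: "u \<in> W" "v \<in> W" "{u, v} \<in> S"
    then have "{v, u} \<in> S" "u \<noteq> v" using assms(5) by (auto simp: insert_commute)
    consider "u \<in> W - T" "v \<in> W - T" | "u \<in> W - T" "v \<in> T" | "u \<in> T" "v \<in> W - T"
      | "u \<in> T" "v \<in> T" using uv(1,2) by blast
    then show "col u \<noteq> col v"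
    proof cases
      case 1 then show ?thesis using assms(1,2) uv(3) by (simp add: proper_coloring_def)
    next
      case 2 then show ?thesis using cross uv(3) by blast
    next
      case 3 then show ?thesis using cross \<open>{v, u} \<in> S\<close> by metis
    next
      case 4 then show ?thesis using assms(4) \<open>u \<noteq> v\<close> by (auto dest: inj_onD)
    qed
  qed
qed

lemma equitable3_extend:
  assumes "finite W" "T \<subseteq> W" "bij_betw col T {..<3}"
    and "equitable3 (W - T) col0" "\<forall>v \<in> W - T. col v = col0 v"
  shows "equitable3 W col"
  unfolding equitable3_def
proof (intro conjI allI impI)
  have "col ` W \<subseteq> col0 ` (W - T) \<union> col ` T" using assms(5) by fastforce
  moreover have "col0 ` (W - T) \<subseteq> {..<3}" "col ` T = {..<3}"
    using assms(3,4) by (simp_all add: equitable3_def bij_betw_def)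
  ultimately show "col ` W \<subseteq> {..<3}" by blast
  fix i :: nat assume i: "i < 3"
  have "card T = 3" using bij_betw_same_card[OF assms(3)] by simp
  then have card_W: "card W = card (W - T) + 3"
    using card_Diff_subset[OF _ assms(2)] card_mono[OF assms(1,2)] assms(1) finite_subset[OF assms(2)] by simp
  have "{v \<in> W. col v = i} = {v \<in> W - T. col0 v = i} \<union> {t \<in> T. col t = i}"
    using assms(2,5) by auto
  moreover have "finite (W - T)" "finite T" using assms(1,2) finite_subset by auto
  ultimately have "card {v \<in> W. col v = i} = card {v \<in> W - T. col0 v = i} + card {t \<in> T. col t = i}"
    by (simp only:) (rule card_Un_disjoint; auto)
  also have "\<dots> = (card (W - T) + 2 - i) div 3 + 1"
    using assms(4) i card_fiber_bij_betw[OF assms(3)] by (simp add: equitable3_def)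
  also have "\<dots> = (card W + 2 - i) div 3" using card_W i by simp
  finally show "card {v \<in> W. col v = i} = (card W + 2 - i) div 3" .
qed

lemma extend_coloring:
  assumes triple: "removable_triple S W a b c" and "finite W" and "\<forall>u. {u} \<notin> S"
    and col0: "proper_coloring S (W - {a, b, c}) col0" "equitable3 (W - {a, b, c}) col0"
  shows "\<exists>col. proper_coloring S W col \<and> equitable3 W col"
proof -
  let ?W' = "W - {a, b, c}"
  have abc: "{a, b, c} \<subseteq> W" "distinct [a, b, c]"
    using triple by (auto simp: removable_triple_def)
  have "finite (col0 ` nbrs S ?W' b)" "finite (col0 ` nbrs S ?W' c)"
    using assms(2) by (simp_all add: finite_nbrs)
  moreover have "card (col0 ` nbrs S ?W' b) \<le> 1" "card (col0 ` nbrs S ?W' c) \<le> 2"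
    using triple card_image_le[of "nbrs S ?W' b" col0] card_image_le[of "nbrs S ?W' c" col0] assms(2)
    by (auto simp: removable_triple_def finite_nbrs)
  ultimately obtain ca cb cc where colors: "{ca, cb, cc} = {..<3}"
    "cb \<notin> col0 ` nbrs S ?W' b" "cc \<notin> col0 ` nbrs S ?W' c"
    using exists_colors_for_triple by meson
  define col where "col = col0(a := ca, b := cb, c := cc)"
  have image: "col ` {a, b, c} = {..<3}" using abc(2) colors(1) by (auto simp: col_def)
  moreover have "inj_on col {a, b, c}"
    by (rule eq_card_imp_inj_on) (use image abc(2) in simp_all)
  ultimately have bij: "bij_betw col {a, b, c} {..<3}" by (simp add: bij_betw_def)
  have agree: "\<forall>v \<in> ?W'. col v = col0 v" by (simp add: col_def)
  have "\<forall>t \<in> {a, b, c}. col t \<notin> col0 ` nbrs S ?W' t"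
    using abc(2) colors(2,3) triple by (auto simp: removable_triple_def col_def)
  then have "proper_coloring S W col"
    using proper_coloring_extend[OF col0(1) agree] bij assms(3) by (simp add: bij_betw_def)
  moreover have "equitable3 W col" using equitable3_extend[OF assms(2) abc(1) bij col0(2) agree] .
  ultimately show ?thesis by blast
qed

lemma small_coloring:
  assumes "finite W" "card W \<le> 2" "\<forall>u. {u} \<notin> S"
  shows "\<exists>col. proper_coloring S W col \<and> equitable3 W col"
proof -
  have "card W = 0 \<or> card W = 1 \<or> card W = 2" using assms(2) by linarith
  then consider "W = {}" | a where "W = {a}" | a b where "W = {a, b}" "a \<noteq> b"
    using assms(1) by (auto simp: card_1_singleton_iff card_2_iff)
  then show ?thesis
  proof cases
    case 1
    then show ?thesis by (auto simp: proper_coloring_def equitable3_def)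
  next
    case (2 a)
    have "{v \<in> W. (0::nat) = i} = (if i = 0 then {a} else {})" for i using 2 by auto
    then have "equitable3 W (\<lambda>_. 0)" using 2 by (auto simp: equitable3_def)
    moreover have "proper_coloring S W (\<lambda>_. 0)" using 2 assms(3) by (simp add: proper_coloring_def)
    ultimately show ?thesis by blast
  next
    case (3 a b)
    define col where "col v = (if v = a then 0 else 1 :: nat)" for v
    have "{v \<in> W. col v = i} = (if i = 0 then {a} else if i = 1 then {b} else {})" for i
      using 3 by (auto simp: col_def)
    then have "equitable3 W col" using 3 by (auto simp: equitable3_def col_def)
    moreover have "proper_coloring S W col" using 3 assms(3) by (auto simp: proper_coloring_def col_def)
    ultimately show ?thesis by blast
  qed
qed

lemma card_nbrs_le_degree:
  assumes "finite {e \<in> S. v \<in> e}"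
  shows "card (nbrs S W v) \<le> card {e \<in> S. v \<in> e}"
proof (rule card_inj_on_le)
  show "inj_on (\<lambda>u. {u, v}) (nbrs S W v)" by (auto simp: inj_on_def doubleton_eq_iff)
  show "(\<lambda>u. {u, v}) ` nbrs S W v \<subseteq> {e \<in> S. v \<in> e}" by (auto simp: nbrs_def)
qed fact

lemma edge_notin_mono_pairs:
  assumes "proper_coloring S W col" "e \<in> S"
  shows "e \<notin> mono_pairs W col"
proof
  assume mono: "e \<in> mono_pairs W col"
  then obtain u v where "e = {u, v}" "u \<noteq> v" by (auto simp: mono_pairs_def card_2_iff)
  then show False using mono assms by (auto simp: doubleton_in_mono_pairs_iff proper_coloring_def)
qed

locale forest =
  fixes S :: "nat set set"
  assumes pair_edges: "\<forall>e \<in> S. card e = 2"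
    and acyclic: "req_acyclic S"
begin

lemma singleton_notin: "{u} \<notin> S"
  using pair_edges by force

lemma nbrs_irrefl: "v \<notin> nbrs S V v"
  by (simp add: nbrs_def singleton_notin)

lemma no_closing_edge:
  assumes "path_in S V G" "3 \<le> length G"
  shows "{last G, hd G} \<notin> S"
  using acyclic assms by (auto simp: req_acyclic_def path_in_def)

text \<open>The last vertex of a longest path has all its neighbours on the path, and a neighbour
  other than its predecessor would close a cycle.\<close>
lemma exists_vertex_degree_le_1:
  assumes "finite V" "V \<noteq> {}"
  shows "\<exists>v \<in> V. card (nbrs S V v) \<le> 1"
proof (rule ccontr)
  assume "\<not> ?thesis"
  then have deg2: "2 \<le> card (nbrs S V v)" if "v \<in> V" for v
    using that by fastforce
  obtain v0 where "v0 \<in> V" using assms(2) by blast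
  then have "path_in S V [v0]" by (simp add: path_in_def)
  moreover have "length G < card V + 1" if "path_in S V G" for G
  proof -
    have "distinct G" "set G \<subseteq> V" using that by (simp_all add: path_in_def)
    then show ?thesis using distinct_card[of G] card_mono[OF assms(1), of "set G"] by linarith
  qed
  ultimately obtain G where G: "path_in S V G"
    and longest: "\<And>G'. path_in S V G' \<Longrightarrow> length G' \<le> length G"
    using ex_has_greatest_nat[of "path_in S V" "[v0]" length "card V + 1"] by blast
  define L where "L = length G"
  have "G \<noteq> []" "set G \<subseteq> V" using G by (auto simp: path_in_def)
  then have l: "last G = G ! (L - 1)" "last G \<in> V" by (auto simp: L_def last_conv_nth)
  \<comment> \<open>for \<open>L = 1\<close> the excluded \<open>G ! (L - 2)\<close> is \<open>last G\<close> itself, which is not a neighbour\<close>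
  have "card (nbrs S V (last G) - {G ! (L - 2)}) \<noteq> 0"
    using deg2[OF l(2)] by (simp add: card_Diff_singleton_if)
  then have "nbrs S V (last G) - {G ! (L - 2)} \<noteq> {}"
    by (metis card.empty)
  then obtain u where u: "u \<in> nbrs S V (last G)" "u \<noteq> G ! (L - 2)"
    by blast
  have lu: "{last G, u} \<in> S" "u \<in> V" "u \<noteq> last G"
    using u(1) nbrs_irrefl[of "last G" V] by (auto simp: nbrs_def insert_commute[of "last G"])
  show False
  proof (cases "u \<in> set G")
    case False
    show False using longest[OF path_in_snoc[OF G lu(2) False lu(1)]] by simp
  next
    case True
    then obtain i where i: "i < L" "u = G ! i" by (auto simp: in_set_conv_nth L_def)
    moreover have "i \<noteq> L - 1" "i \<noteq> L - 2" using i u(2) lu(3) l(1) by auto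
    ultimately have "i + 3 \<le> L" by linarith
    then have "path_in S V (drop i G)" "3 \<le> length (drop i G)"
      using path_in_drop[OF G] by (auto simp: L_def)
    then have "{last (drop i G), hd (drop i G)} \<notin> S" by (rule no_closing_edge)
    moreover have "last (drop i G) = last G" "hd (drop i G) = u"
      using i by (auto simp: L_def hd_drop_conv_nth)
    ultimately show False using lu(1) by simp
  qed
qed

lemma removable_triple_pendant:
  assumes "finite W" "3 \<le> card W" "x \<in> W" "y \<in> W" "x \<noteq> y"
    and "nbrs S W x \<subseteq> {y}" "card (nbrs S (W - {x}) y) \<le> 1"
  shows "\<exists>a b c. removable_triple S W a b c"
proof -
  have "card (W - {x, y}) \<noteq> 0" using assms(1-5) by (simp add: card_Diff_subset)
  then obtain c where c: "c \<in> W - {x, y}" "card (nbrs S (W - {x, y}) c) \<le> 1"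
    using exists_vertex_degree_le_1[of "W - {x, y}"] assms(1) by (metis card.empty finite_Diff)
  let ?W' = "W - {x, y, c}"
  have "nbrs S ?W' x = {}" using assms(6) by (auto simp: nbrs_def)
  moreover have "card (nbrs S ?W' y) \<le> card (nbrs S (W - {x}) y)"
    by (rule card_nbrs_mono) (use assms(1) in auto)
  moreover have "card (nbrs S ?W' c) \<le> card (nbrs S (W - {x, y}) c)"
    by (rule card_nbrs_mono) (use assms(1) in auto)
  ultimately have "removable_triple S W x y c"
    using assms(3-5,7) c by (auto simp: removable_triple_def)
  then show ?thesis by blast
qed

lemma removable_triple_if_max_degree_le_1:
  assumes "finite W" "3 \<le> card W" "\<forall>v \<in> W. card (nbrs S W v) \<le> 1"
  shows "\<exists>a b c. removable_triple S W a b c"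
proof -
  obtain x where x: "x \<in> W" using assms(2) by fastforce
  obtain y where y: "y \<in> W" "x \<noteq> y" "nbrs S W x \<subseteq> {y}"
  proof (cases "nbrs S W x = {}")
    case True
    have "card (W - {x}) \<noteq> 0" using assms(2) x by simp
    then have "W - {x} \<noteq> {}" by (metis card.empty)
    then show ?thesis using that True by blast
  next
    case False
    then obtain y where "y \<in> nbrs S W x" by blast
    moreover have "y \<in> W" "x \<noteq> y" using calculation nbrs_irrefl[of x W] by (auto simp: nbrs_def)
    ultimately show ?thesis using that nbrs_subset_singleton[OF assms(1)] assms(3) x by blast
  qed
  have "card (nbrs S (W - {x}) y) \<le> card (nbrs S W y)"
    by (rule card_nbrs_mono) (use assms(1) in auto)
  then have "card (nbrs S (W - {x}) y) \<le> 1" using assms(3) y(1) by fastforce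
  then show ?thesis using removable_triple_pendant[OF assms(1,2) x y(1,2,3)] by blast
qed

lemma removable_triple_at_leaves:
  fixes W D :: "nat set"
  defines "D \<equiv> {v \<in> W. card (nbrs S W v) \<le> 1}"
  assumes "finite W" "3 \<le> card W" "y \<in> W" "2 \<le> card (nbrs S W y)" "card (nbrs S W y) \<le> 4"
    and "card (nbrs S (W - D) y) \<le> 1"
  shows "\<exists>a b c. removable_triple S W a b c"
proof -
  have split: "nbrs S W y = nbrs S (W - D) y \<union> nbrs S D y"
    by (auto simp: nbrs_def D_def)
  have pendant: "nbrs S W x \<subseteq> {y}" if "x \<in> nbrs S D y" for x
  proof (rule nbrs_subset_singleton[OF assms(2)])
    show "card (nbrs S W x) \<le> 1" using that by (simp add: nbrs_def D_def)
    show "y \<in> nbrs S W x" using that assms(4) by (auto intro: nbrs_sym)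
  qed
  show ?thesis
  proof (cases "2 \<le> card (nbrs S D y)")
    case True
    moreover have "finite (nbrs S D y)" using assms(2) by (simp add: D_def finite_nbrs)
    ultimately obtain x1 x2 where x: "x1 \<in> nbrs S D y" "x2 \<in> nbrs S D y" "x1 \<noteq> x2"
      using card_le_Suc0_iff_eq by (metis not_less_eq_eq numeral_2_eq_2)
    have "removable_triple S W x1 x2 y"
    proof (rule removable_triple_cherry)
      show "x1 \<in> nbrs S W y" "x2 \<in> nbrs S W y" using x(1,2) split by auto
      show "nbrs S W x1 \<subseteq> {y}" "nbrs S W x2 \<subseteq> {y}" using pendant x(1,2) by auto
      show "y \<notin> nbrs S W y" by (rule nbrs_irrefl)
    qed (use assms x in auto)
    then show ?thesis by blast
  next
    case False
    have "2 \<le> card (nbrs S (W - D) y) + card (nbrs S D y)"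
      using assms(5) card_Un_le[of "nbrs S (W - D) y" "nbrs S D y"] unfolding split by linarith
    then have "card (nbrs S D y) = 1" using False assms(7) by linarith
    then obtain x where x: "nbrs S D y = {x}" by (rule card_1_singletonE)
    have "x \<in> W" "x \<noteq> y" using x nbrs_irrefl[of y D] by (auto simp: nbrs_def D_def)
    moreover have "nbrs S (W - {x}) y \<subseteq> nbrs S (W - D) y" using x by (auto simp: nbrs_def)
    then have "card (nbrs S (W - {x}) y) \<le> 1"
      using assms(2,7) card_mono[OF finite_nbrs] by (meson finite_Diff le_trans)
    ultimately show ?thesis
      using removable_triple_pendant[OF assms(2,3)] assms(4) pendant[of x] x by simp
  qed
qed

lemma exists_removable_triple:
  assumes "finite W" "3 \<le> card W" "\<forall>v \<in> W. card (nbrs S W v) \<le> 4"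
  shows "\<exists>a b c. removable_triple S W a b c"
proof -
  define D where "D = {v \<in> W. card (nbrs S W v) \<le> 1}"
  show ?thesis
  proof (cases "W - D = {}")
    case True
    then show ?thesis using removable_triple_if_max_degree_le_1[OF assms(1,2)] by (auto simp: D_def)
  next
    case False
    then obtain y where "y \<in> W - D" "card (nbrs S (W - D) y) \<le> 1"
      using exists_vertex_degree_le_1[of "W - D"] assms(1) by blast
    then show ?thesis
      using removable_triple_at_leaves[OF assms(1,2)] assms(3) by (auto simp: D_def)
  qed
qed

theorem equitable_3_coloring:
  assumes "finite W" "\<forall>v \<in> W. card (nbrs S W v) \<le> 4"
  shows "\<exists>col. proper_coloring S W col \<and> equitable3 W col"
  using assms
proof (induction "card W" arbitrary: W rule: less_induct)
  case less
  show ?case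
  proof (cases "card W \<le> 2")
    case True
    then show ?thesis using small_coloring less.prems(1) singleton_notin by blast
  next
    case False
    then obtain a b c where triple: "removable_triple S W a b c"
      using exists_removable_triple less.prems by fastforce
    let ?W' = "W - {a, b, c}"
    have "a \<in> W" using triple by (simp add: removable_triple_def)
    then have "card ?W' < card W" "finite ?W'"
      using less.prems(1) by (auto intro!: psubset_card_mono)
    moreover have "\<forall>v \<in> ?W'. card (nbrs S ?W' v) \<le> 4"
      using less.prems card_nbrs_mono[of W ?W'] by (meson DiffD1 Diff_subset le_trans)
    ultimately obtain col0 where "proper_coloring S ?W' col0" "equitable3 ?W' col0"
      using less.hyps by blast
    then show ?thesis
      using extend_coloring[OF triple less.prems(1)] singleton_notin by blast
  qed
qed

end

section \<open>The optimal design\<close>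

lemma sum_equitable_class_pairs:
  "(\<Sum>i < 3. (n + 2 - i) div 3 choose 2) = n div 3 * (n mod 3) + 3 * (n div 3 choose 2)"
proof -
  define v where "v = n div 3"
  have sum3: "(\<Sum>i < 3. g i) = g 0 + g 1 + g (2::nat)" for g :: "nat \<Rightarrow> nat"
    by (simp add: numeral_3_eq_3 numeral_2_eq_2)
  have Suc_choose: "Suc v choose 2 = (v choose 2) + v" by (simp add: numeral_2_eq_2)
  have "n mod 3 = 0 \<or> n mod 3 = 1 \<or> n mod 3 = 2" by linarith
  then show ?thesis
  proof (elim disjE)
    assume "n mod 3 = 0"
    then have "(n + 2) div 3 = v" "(n + 1) div 3 = v" by (simp_all add: v_def) presburger+
    then show ?thesis using \<open>n mod 3 = 0\<close> by (simp add: sum3 v_def)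
  next
    assume "n mod 3 = 1"
    then have "(n + 2) div 3 = Suc v" "(n + 1) div 3 = v" by (simp_all add: v_def) presburger+
    then show ?thesis using \<open>n mod 3 = 1\<close> Suc_choose by (simp add: sum3 v_def)
  next
    assume "n mod 3 = 2"
    then have "(n + 2) div 3 = Suc v" "(n + 1) div 3 = Suc v" by (simp_all add: v_def) presburger+
    then show ?thesis using \<open>n mod 3 = 2\<close> Suc_choose by (simp add: sum3 v_def)
  qed
qed

lemma card_mono_pairs_equitable3:
  assumes "finite W" "equitable3 W col"
  shows "card (mono_pairs W col) = card W div 3 * (card W mod 3) + 3 * (card W div 3 choose 2)"
proof -
  have "card (mono_pairs W col) = (\<Sum>i < 3. card {v \<in> W. col v = i} choose 2)"
    using assms by (intro card_mono_pairs) (simp_all add: equitable3_def)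
  also have "\<dots> = (\<Sum>i < 3. (card W + 2 - i) div 3 choose 2)"
    using assms(2) by (simp add: equitable3_def)
  finally show ?thesis using sum_equitable_class_pairs[of "card W"] by simp
qed

lemma equitable3_class_nonempty:
  assumes "equitable3 W col" "i < 3" "i < card W"
  shows "\<exists>v \<in> W. col v = i"
proof -
  have "card {v \<in> W. col v = i} \<noteq> 0" using assms by (simp add: equitable3_def)
  then show ?thesis by (metis (mono_tags, lifting) Collect_empty_eq card.empty)
qed

definition gf2_point :: "nat \<Rightarrow> bool \<times> bool" where
  "gf2_point i = (if i = 0 then (True, False) else if i = 1 then (False, True) else (True, True))"

lemma mono_pairs_gf2_point:
  assumes "equitable3 W col"
  shows "mono_pairs W (gf2_point \<circ> col) = mono_pairs W col"
proof (rule mono_pairs_comp)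
  have "inj_on gf2_point {..<3}" by (auto simp: inj_on_def gf2_point_def)
  then show "inj_on gf2_point (col ` W)"
    using assms by (auto simp: equitable3_def intro: inj_on_subset)
qed

lemma rank2_gf2_point_coloring:
  assumes "2 \<le> n" "equitable3 {0..<n} col"
  shows "rank2 n (gf2_point \<circ> col)"
proof -
  have "\<exists>j \<in> {0..<n}. col j = 0" "\<exists>k \<in> {0..<n}. col k = 1"
    using equitable3_class_nonempty[OF assms(2)] assms(1) by simp_all
  then obtain j k where "j < n" "col j = 0" "k < n" "col k = 1" by auto
  then show ?thesis by (intro rank2_if_unit_columns[of j n k]) (simp_all add: gf2_point_def)
qed

lemma num_est_2fi_gf2_point_coloring:
  assumes "2 \<le> n" "equitable3 {0..<n} col"
  shows "int (num_est_2fi n (gf2_point \<circ> col)) = phi_max n"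
  using num_est_2fi_eq[OF rank2_gf2_point_coloring[OF assms]] card_mono_pairs_equitable3[OF _ assms(2)]
  by (simp add: mono_pairs_gf2_point[OF assms(2)] phi_max_def Let_def)

theorem corollary6:
  fixes n :: nat and S :: "nat set set"
  assumes "n \<ge> 2"
    and "\<forall>e \<in> S. e \<subseteq> {0..<n} \<and> card e = 2"
    and "req_acyclic S"
    and "\<forall>j < n. card {e \<in> S. j \<in> e} \<le> 4"
  shows "\<exists>X :: genmat. rank2 n X \<and> (\<forall>j < n. X j \<noteq> (False, False))
           \<and> (\<forall>e \<in> S. estimable n X e)
           \<and> int (num_est_2fi n X) = phi_max n"
proof -
  interpret forest S using assms(2,3) by unfold_locales auto
  have "finite S" using assms(2) by (intro finite_subset[of S "Pow {0..<n}"]) auto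
  then have "\<forall>v \<in> {0..<n}. card (nbrs S {0..<n} v) \<le> 4"
    using assms(4) card_nbrs_le_degree[of S] by (fastforce intro: le_trans)
  then obtain col where col: "proper_coloring S {0..<n} col" "equitable3 {0..<n} col"
    using equitable_3_coloring by blast
  let ?X = "gf2_point \<circ> col"
  have rank: "rank2 n ?X" using rank2_gf2_point_coloring[OF assms(1) col(2)] .
  have "\<forall>e \<in> S. estimable n ?X e"
    using estimable_pairs_eq[OF rank] edge_notin_mono_pairs[OF col(1)] mono_pairs_gf2_point[OF col(2)]
      assms(2) by blast
  moreover have "\<forall>j < n. ?X j \<noteq> (False, False)" by (simp add: gf2_point_def)
  ultimately show ?thesis
    using rank num_est_2fi_gf2_point_coloring[OF assms(1) col(2)] by blast
qed

end
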